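(* Let $\beta\colon[0,\infty)\to(0,1)$ be continuous, let $D$ be the multistable subordinator with index $\beta$ and let $E(r)=\inf\{t\ge0: D(t)\ge r\}$, $r\ge0$, be its right-continuous inverse (see the context). Then the sample paths of $E$ are almost surely continuous and non-decreasing.
   Context: Let $\beta\colon[0,\infty)\to(0,1)$ be a continuous function. Let $\Pi=\{(t_i,x_i)\}$ be a Poisson point process on $[0,\infty)\times(0,\infty)$ with intensity measure $\nu(dt,dx)=\beta(t)x^{-\beta(t)-1}\,dt\,dx$. The multistable subordinator with index $\beta$ is the process $D(t)=\sum_{(t_i,x_i)\in\Pi,\ t_i\le t}x_i$, $t\ge0$ (this sum is a.s. finite since $\int_0^t(1-\beta(s))^{-1}ds<\infty$). *)

theory Defs
  imports "HOL-Probability.Probability"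
begin

definition ms_intensity :: "(real \<Rightarrow> real) \<Rightarrow> (real \<times> real) measure" where
  "ms_intensity \<beta> = density lborel
     (\<lambda>(t, x). if 0 \<le> t \<and> 0 < x then ennreal (\<beta> t * x powr (- \<beta> t - 1)) else 0)"

definition pp_count :: "'p set \<Rightarrow> 'p set \<Rightarrow> ennreal" where
  "pp_count P B = (if finite (P \<inter> B) then of_nat (card (P \<inter> B)) else \<infinity>)"

definition poisson_point_process ::
  "'a measure \<Rightarrow> ('a \<Rightarrow> 'p set) \<Rightarrow> 'p set \<Rightarrow> 'p measure \<Rightarrow> bool" where
  "poisson_point_process M P S \<nu> \<longleftrightarrow>
     prob_space M \<and>
     (\<forall>\<omega>\<in>space M. P \<omega> \<subseteq> S) \<and>
     (\<forall>B \<in> sets \<nu>.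
        (\<lambda>\<omega>. pp_count (P \<omega>) B) \<in> borel_measurable M \<and>
        (emeasure \<nu> B < \<infinity> \<longrightarrow>
           (\<forall>k::nat. measure M {\<omega> \<in> space M. pp_count (P \<omega>) B = of_nat k}
                = exp (- enn2real (emeasure \<nu> B)) * enn2real (emeasure \<nu> B) ^ k / fact k)) \<and>
        (emeasure \<nu> B = \<infinity> \<longrightarrow> (AE \<omega> in M. pp_count (P \<omega>) B = \<infinity>))) \<and>
     (\<forall>(n::nat) Bs. (\<forall>i<n. Bs i \<in> sets \<nu>) \<longrightarrow> disjoint_family_on Bs {..<n} \<longrightarrow>
        prob_space.indep_vars M (\<lambda>_. borel) (\<lambda>i \<omega>. pp_count (P \<omega>) (Bs i)) {..<n})"

definition ms_subordinator :: "('a \<Rightarrow> (real \<times> real) set) \<Rightarrow> 'a \<Rightarrow> real \<Rightarrow> ennreal" where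
  "ms_subordinator P \<omega> t =
     (\<integral>\<^sup>+ p. ennreal (snd p) \<partial>count_space {p \<in> P \<omega>. fst p \<le> t})"

definition ms_inverse :: "('a \<Rightarrow> (real \<times> real) set) \<Rightarrow> 'a \<Rightarrow> real \<Rightarrow> real" where
  "ms_inverse P \<omega> r = Inf {t. 0 \<le> t \<and> ennreal r \<le> ms_subordinator P \<omega> t}"

end

theory Submission
  imports Defs
begin

(* The intensity has infinite mass on [0,\<infinity>) \<times> [1,\<infinity>) and, because x powr (-\<beta> t - 1) is not
   integrable at 0, on every strip (a,b] \<times> (0,\<infinity>). Hence almost surely there are infinitely many jumps
   of size at least 1 and, using only rational strips, a jump in every time interval (a,b]. So D is unbounded
   and strictly increasing wherever it is finite, and its first-passage time E is non-decreasing and has no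
   jumps, since a jump of E would be a flat stretch of D. *)

lemma ennreal_eq_top_if_of_nat_le:
  fixes x :: ennreal
  assumes "\<And>n. of_nat n \<le> x"
  shows "x = \<infinity>"
proof -
  have "(SUP n. of_nat n :: ennreal) \<le> x" using assms by (rule SUP_least)
  then show ?thesis by (simp add: ennreal_SUP_of_nat_eq_top top_unique)
qed

lemma emeasure_lborel_atLeast: "emeasure lborel {a::real..} = \<infinity>"
proof (rule ennreal_eq_top_if_of_nat_le)
  fix n
  have "of_nat n = emeasure lborel {a..a + real n}" by (simp add: ennreal_of_nat_eq_real_of_nat)
  also have "\<dots> \<le> emeasure lborel {a..}" by (rule emeasure_mono) auto
  finally show "of_nat n \<le> emeasure lborel {a..}" .
qed

lemma nn_integral_powr_atLeast:
  fixes b c :: real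
  assumes "0 < b" "0 < c"
  shows "(\<integral>\<^sup>+x\<in>{c..}. ennreal (b * x powr (-b-1)) \<partial>lborel) = ennreal (c powr -b)"
proof -
  have "((\<lambda>x. x powr (-b-1)) has_integral -(c powr (-b-1+1)) / (-b-1+1)) {c..}"
    by (rule has_integral_powr_to_inf) (use assms in auto)
  then have "((\<lambda>x. b * x powr (-b-1)) has_integral b * (c powr -b / b)) {c..}"
    by (intro has_integral_mult_right) simp
  then have "((\<lambda>x. b * x powr (-b-1)) has_integral c powr -b) {c..}"
    using assms by simp
  from nn_integral_has_integral_lebesgue'[OF _ this] assms show ?thesis
    by (simp add: mult.commute)
qed

lemma nn_integral_powr_greaterThan_0:
  fixes b :: real
  assumes "0 < b"
  shows "(\<integral>\<^sup>+x\<in>{0<..}. ennreal (b * x powr (-b-1)) \<partial>lborel) = \<infinity>"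
proof (rule ennreal_eq_top_if_of_nat_le)
  fix n :: nat
  define c where "c = real (Suc n) powr (-1/b)"
  have "c > 0" by (simp add: c_def)
  have "of_nat n \<le> ennreal (c powr -b)"
    using assms by (simp add: c_def powr_powr ennreal_of_nat_eq_real_of_nat)
  also have "\<dots> = (\<integral>\<^sup>+x\<in>{c..}. ennreal (b * x powr (-b-1)) \<partial>lborel)"
    using assms \<open>c > 0\<close> by (rule nn_integral_powr_atLeast[symmetric])
  also have "\<dots> \<le> (\<integral>\<^sup>+x\<in>{0<..}. ennreal (b * x powr (-b-1)) \<partial>lborel)"
    using \<open>c > 0\<close> by (intro nn_integral_mono) (auto simp: indicator_def)
  finally show "of_nat n \<le> \<dots>" .
qed

lemma emeasure_ms_intensity_Times:
  fixes A B :: "real set"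
  assumes "continuous_on {0..} \<beta>" "A \<in> sets borel" "B \<in> sets borel"
  shows "emeasure (ms_intensity \<beta>) (A \<times> B) =
    (\<integral>\<^sup>+t\<in>A \<inter> {0..}. (\<integral>\<^sup>+x\<in>B \<inter> {0<..}. ennreal (\<beta> t * x powr (- \<beta> t - 1)) \<partial>lborel) \<partial>lborel)"
proof -
  \<comment> \<open>Freezing \<beta> left of 0 makes it continuous everywhere, so the density is Borel measurable.\<close>
  define \<beta>' where "\<beta>' t = \<beta> (max 0 t)" for t
  define f where "f = (\<lambda>(t, x). if 0 \<le> t \<and> 0 < x then ennreal (\<beta>' t * x powr (- \<beta>' t - 1)) else 0)"
  have "continuous_on UNIV \<beta>'"
    unfolding \<beta>'_def using assms(1)
    by (rule continuous_on_compose2[where t="{0..}"]) (auto intro: continuous_intros)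
  then have "\<beta>' \<in> borel_measurable borel"
    by (intro borel_measurable_continuous_onI) simp
  then have f_meas: "f \<in> borel_measurable (lborel \<Otimes>\<^sub>M lborel)"
    unfolding f_def by measurable
  have "ms_intensity \<beta> = density lborel f"
    unfolding ms_intensity_def f_def \<beta>'_def by (rule arg_cong[where f="density lborel"]) (auto simp: max_def)
  then have "emeasure (ms_intensity \<beta>) (A \<times> B) = (\<integral>\<^sup>+p. f p * indicator (A \<times> B) p \<partial>(lborel \<Otimes>\<^sub>M lborel))"
    using f_meas assms(2,3) unfolding lborel_prod[symmetric] by (simp add: emeasure_density)
  also have "\<dots> = (\<integral>\<^sup>+t. \<integral>\<^sup>+x. f (t, x) * indicator (A \<times> B) (t, x) \<partial>lborel \<partial>lborel)"
    using f_meas assms(2,3) by (subst lborel.nn_integral_fst[symmetric]) auto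
  also have "\<dots> = (\<integral>\<^sup>+t\<in>A \<inter> {0..}. (\<integral>\<^sup>+x\<in>B \<inter> {0<..}. ennreal (\<beta> t * x powr (- \<beta> t - 1)) \<partial>lborel) \<partial>lborel)"
    by (auto intro!: nn_integral_cong simp: f_def \<beta>'_def indicator_def nn_integral_cmult[symmetric])
  finally show ?thesis .
qed

lemma emeasure_ms_intensity_large_jumps:
  assumes "continuous_on {0..} \<beta>" "\<And>t. 0 \<le> t \<Longrightarrow> 0 < \<beta> t"
  shows "emeasure (ms_intensity \<beta>) ({0..} \<times> {1..}) = \<infinity>"
proof -
  have "{1..} \<inter> {0<..} = {1::real..}" by auto
  then have "emeasure (ms_intensity \<beta>) ({0..} \<times> {1..}) = (\<integral>\<^sup>+t\<in>{0::real..}. 1 \<partial>lborel)"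
    unfolding emeasure_ms_intensity_Times[OF assms(1) atLeast_borel atLeast_borel]
    by (intro set_nn_integral_cong) (auto simp: assms(2) nn_integral_powr_atLeast)
  also have "\<dots> = \<infinity>" by (simp add: emeasure_lborel_atLeast)
  finally show ?thesis .
qed

lemma emeasure_ms_intensity_time_strip:
  assumes "continuous_on {0..} \<beta>" "\<And>t. 0 \<le> t \<Longrightarrow> 0 < \<beta> t" "0 \<le> a" "a < b"
  shows "emeasure (ms_intensity \<beta>) ({a<..b} \<times> {0<..}) = \<infinity>"
proof -
  have "emeasure (ms_intensity \<beta>) ({a<..b} \<times> {0<..}) = (\<integral>\<^sup>+t::real\<in>{a<..b}. \<infinity> \<partial>lborel)"
    unfolding emeasure_ms_intensity_Times[OF assms(1) greaterThanAtMost_borel greaterThan_borel]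
    using assms(3) by (intro set_nn_integral_cong) (auto simp: assms(2) nn_integral_powr_greaterThan_0 Int_absorb2)
  also have "\<dots> = \<infinity>"
    using assms(4) by (simp add: nn_integral_cmult_indicator ennreal_mult_top)
  finally show ?thesis .
qed

lemma poisson_point_process_AE_infinite:
  assumes "poisson_point_process M P S \<nu>" "B \<in> sets \<nu>" "emeasure \<nu> B = \<infinity>"
  shows "AE \<omega> in M. infinite (P \<omega> \<inter> B)"
proof -
  have "AE \<omega> in M. pp_count (P \<omega>) B = \<infinity>"
    using assms unfolding poisson_point_process_def by blast
  then show ?thesis by eventually_elim (simp add: pp_count_def split: if_splits)
qed

lemma AE_point_in_every_interval:
  fixes P :: "'a \<Rightarrow> (real \<times> 'b) set"
  assumes "\<And>a b. 0 \<le> a \<Longrightarrow> a < b \<Longrightarrow> AE \<omega> in M. \<exists>p\<in>P \<omega>. a < fst p \<and> fst p \<le> b"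
  shows "AE \<omega> in M. \<forall>a b. 0 \<le> a \<longrightarrow> a < b \<longrightarrow> (\<exists>p\<in>P \<omega>. a < fst p \<and> fst p \<le> b)"
proof -
  have "AE \<omega> in M. \<forall>(a, b)\<in>\<rat> \<times> \<rat>. 0 \<le> a \<longrightarrow> a < b \<longrightarrow> (\<exists>p\<in>P \<omega>. a < fst p \<and> fst p \<le> b)"
    using assms by (intro AE_ball_countable') (auto intro: countable_SIGMA countable_rat)
  then show ?thesis
  proof eventually_elim
    case (elim \<omega>)
    show ?case
    proof (intro allI impI)
      fix a b :: real assume "0 \<le> a" "a < b"
      obtain a' where "a' \<in> \<rat>" "a < a'" "a' < b" using Rats_dense_in_real[OF \<open>a < b\<close>] by blast
      obtain b' where "b' \<in> \<rat>" "a' < b'" "b' < b" using Rats_dense_in_real[OF \<open>a' < b\<close>] by blast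
      with elim \<open>0 \<le> a\<close> \<open>a' \<in> \<rat>\<close> \<open>a < a'\<close> obtain p where "p \<in> P \<omega>" "a' < fst p" "fst p \<le> b'"
        by fastforce
      with \<open>a < a'\<close> \<open>b' < b\<close> show "\<exists>p\<in>P \<omega>. a < fst p \<and> fst p \<le> b" by force
    qed
  qed
qed

lemma ms_subordinator_add_sum_le:
  assumes "finite F" "F \<subseteq> PP \<omega>" "\<forall>p\<in>F. s < fst p \<and> fst p \<le> t" "s \<le> t"
  shows "ms_subordinator PP \<omega> s + (\<Sum>p\<in>F. ennreal (snd p)) \<le> ms_subordinator PP \<omega> t"
proof -
  let ?f = "\<lambda>p::real \<times> real. ennreal (snd p)"
  have "ms_subordinator PP \<omega> s + (\<Sum>p\<in>F. ?f p) =
     (\<integral>\<^sup>+p. ?f p * indicator {p \<in> PP \<omega>. fst p \<le> s} p \<partial>count_space UNIV)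
       + (\<integral>\<^sup>+p. ?f p * indicator F p \<partial>count_space UNIV)"
    unfolding ms_subordinator_def using assms(1)
    by (simp add: nn_integral_count_space_indicator nn_integral_indicator_finite)
  also have "\<dots> = (\<integral>\<^sup>+p. ?f p * indicator {p \<in> PP \<omega>. fst p \<le> s} p + ?f p * indicator F p \<partial>count_space UNIV)"
    by (rule nn_integral_add[symmetric]) auto
  also have "\<dots> \<le> (\<integral>\<^sup>+p. ?f p * indicator {p \<in> PP \<omega>. fst p \<le> t} p \<partial>count_space UNIV)"
    using assms by (intro nn_integral_mono) (auto simp: indicator_def)
  also have "\<dots> = ms_subordinator PP \<omega> t"
    unfolding ms_subordinator_def by (simp add: nn_integral_count_space_indicator)
  finally show ?thesis .
qed

lemma mono_ms_subordinator: "mono (ms_subordinator PP \<omega>)"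
  using ms_subordinator_add_sum_le[of "{}" PP \<omega>] by (auto intro: monoI)

lemma ms_subordinator_less_across_jump:
  assumes "p \<in> PP \<omega>" "0 < snd p" "s < fst p" "fst p \<le> t" "ms_subordinator PP \<omega> s \<noteq> \<infinity>"
  shows "ms_subordinator PP \<omega> s < ms_subordinator PP \<omega> t"
proof -
  have "ms_subordinator PP \<omega> s < ms_subordinator PP \<omega> s + ennreal (snd p)"
    using assms(2,5) by (cases "ms_subordinator PP \<omega> s") (auto simp: ennreal_less_iff simp flip: ennreal_plus)
  also have "\<dots> \<le> ms_subordinator PP \<omega> t"
    using ms_subordinator_add_sum_le[of "{p}" PP \<omega> s t] assms(1,3,4) by simp
  finally show ?thesis .
qed

lemma ms_subordinator_unbounded:
  assumes "infinite (PP \<omega> \<inter> ({0..} \<times> {1..}))"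
  shows "\<exists>t\<ge>0. ennreal r \<le> ms_subordinator PP \<omega> t"
proof -
  obtain n :: nat where "r \<le> real n" using real_arch_simple by blast
  obtain F where F: "finite F" "card F = n" "F \<subseteq> PP \<omega> \<inter> ({0..} \<times> {1..})"
    using infinite_arbitrarily_large[OF assms] by blast
  define t where "t = Max (insert 0 (fst ` F))"
  have "0 \<le> t" using F(1) by (simp add: t_def)
  have "\<forall>p\<in>F. -1 < fst p \<and> fst p \<le> t" using F unfolding t_def by (auto intro: Max_ge)
  have "ennreal r \<le> (\<Sum>p\<in>F. 1)" using \<open>r \<le> real n\<close> F(2) by (simp add: ennreal_of_nat_eq_real_of_nat)
  also have "\<dots> \<le> (\<Sum>p\<in>F. ennreal (snd p))" using F(3) by (intro sum_mono) auto
  also have "\<dots> \<le> ms_subordinator PP \<omega> (-1) + (\<Sum>p\<in>F. ennreal (snd p))" by simp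
  also have "\<dots> \<le> ms_subordinator PP \<omega> t"
    using F \<open>0 \<le> t\<close> \<open>\<forall>p\<in>F. -1 < fst p \<and> fst p \<le> t\<close> by (intro ms_subordinator_add_sum_le) auto
  finally show ?thesis using \<open>0 \<le> t\<close> by blast
qed

definition first_passage :: "(real \<Rightarrow> ennreal) \<Rightarrow> real \<Rightarrow> real" where
  "first_passage D r = Inf {t. 0 \<le> t \<and> ennreal r \<le> D t}"

lemma ms_inverse_eq_first_passage: "ms_inverse PP \<omega> = first_passage (ms_subordinator PP \<omega>)"
  by (simp add: fun_eq_iff ms_inverse_def first_passage_def)

lemma first_passage_le:
  assumes "0 \<le> t" "ennreal r \<le> D t"
  shows "first_passage D r \<le> t"
  unfolding first_passage_def using assms by (intro cInf_lower) (auto intro: bdd_belowI[of _ 0])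

lemma first_passage_nonneg:
  assumes "\<exists>t\<ge>0. ennreal r \<le> D t"
  shows "0 \<le> first_passage D r"
  unfolding first_passage_def using assms by (intro cInf_greatest) auto

lemma first_passage_ge:
  assumes "mono D" "\<exists>t\<ge>0. ennreal r \<le> D t" "D a < ennreal r"
  shows "a \<le> first_passage D r"
  unfolding first_passage_def
proof (rule cInf_greatest)
  show "{t. 0 \<le> t \<and> ennreal r \<le> D t} \<noteq> {}" using assms(2) by auto
  fix t assume t: "t \<in> {t. 0 \<le> t \<and> ennreal r \<le> D t}"
  show "a \<le> t"
  proof (rule ccontr)
    assume "\<not> a \<le> t"
    then have "D t \<le> D a" using assms(1) by (simp add: monoD)
    then have "D t < ennreal r" using assms(3) by (rule order.strict_trans1)
    with t show False using leD by blast
  qed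
qed

lemma first_passage_less:
  assumes "\<exists>t\<ge>0. ennreal r \<le> D t" "0 < \<epsilon>"
  obtains t where "0 \<le> t" "ennreal r \<le> D t" "t < first_passage D r + \<epsilon>"
proof -
  have "Inf {t. 0 \<le> t \<and> ennreal r \<le> D t} < first_passage D r + \<epsilon>"
    using assms(2) by (simp add: first_passage_def)
  then show ?thesis
    using assms(1) that by (subst (asm) cInf_less_iff) (auto intro: bdd_belowI[of _ 0])
qed

lemma mono_first_passage:
  assumes "\<And>r. \<exists>t\<ge>0. ennreal r \<le> D t"
  shows "mono (first_passage D)"
proof (rule monoI)
  fix r r' :: real assume "r \<le> r'"
  show "first_passage D r \<le> first_passage D r'"
    unfolding first_passage_def[of D r']
  proof (rule cInf_greatest)
    show "{t. 0 \<le> t \<and> ennreal r' \<le> D t} \<noteq> {}" using assms by auto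
    fix t assume "t \<in> {t. 0 \<le> t \<and> ennreal r' \<le> D t}"
    with \<open>r \<le> r'\<close> show "first_passage D r \<le> t"
      by (auto intro: first_passage_le order_trans[OF ennreal_leI])
  qed
qed

lemma ennreal_less_obtain_real_le:
  assumes "ennreal r < x"
  obtains y where "r < y" "ennreal y \<le> x"
proof (cases x)
  case (real z)
  with assms have "r < z" by (cases "0 \<le> r") (auto simp: ennreal_less_iff ennreal_lt_0)
  with real that show ?thesis by auto
next
  case top
  with that[of "r + 1"] show ?thesis by simp
qed

lemma first_passage_upper_semicontinuous:
  assumes "mono D" "\<And>r. \<exists>t\<ge>0. ennreal r \<le> D t"
    and "\<And>s t. 0 \<le> s \<Longrightarrow> s < t \<Longrightarrow> D s \<noteq> \<infinity> \<Longrightarrow> D s < D t" "0 < \<epsilon>"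
  obtains \<delta> where "0 < \<delta>" "\<And>r. r < r0 + \<delta> \<Longrightarrow> first_passage D r < first_passage D r0 + \<epsilon>"
proof -
  obtain t where t: "0 \<le> t" "ennreal r0 \<le> D t" "t < first_passage D r0 + \<epsilon> / 2"
    using first_passage_less[OF assms(2)] assms(4) by (metis half_gt_zero)
  define b where "b = t + \<epsilon> / 2"
  have "D t < D b \<or> D t = \<infinity>" using assms(3)[of t b] t(1) assms(4) by (auto simp: b_def)
  moreover have "D t \<le> D b" using assms(1) assms(4) by (auto simp: b_def intro: monoD)
  ultimately have "ennreal r0 < D b" using t(2) by (auto simp: top_unique)
  then obtain y where "r0 < y" "ennreal y \<le> D b" by (rule ennreal_less_obtain_real_le)
  show ?thesis
  proof (rule that[of "y - r0"])
    show "0 < y - r0" using \<open>r0 < y\<close> by simp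
    fix r assume "r < r0 + (y - r0)"
    then have "ennreal r \<le> ennreal y" by (simp add: ennreal_leI)
    also have "\<dots> \<le> D b" by fact
    finally have "first_passage D r \<le> b" using t(1) assms(4) by (intro first_passage_le) (auto simp: b_def)
    then show "first_passage D r < first_passage D r0 + \<epsilon>" using t(3) by (simp add: b_def)
  qed
qed

lemma first_passage_lower_semicontinuous:
  assumes "mono D" "\<And>r. \<exists>t\<ge>0. ennreal r \<le> D t" "0 < \<epsilon>"
  obtains \<delta> where "0 < \<delta>" "\<And>r. r0 - \<delta> < r \<Longrightarrow> first_passage D r0 - \<epsilon> < first_passage D r"
proof (cases "first_passage D r0 - \<epsilon> / 2 < 0")
  case True
  show ?thesis
  proof (rule that[of 1])
    fix r
    have "0 \<le> first_passage D r" using assms(2) by (rule first_passage_nonneg)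
    with True assms(3) show "first_passage D r0 - \<epsilon> < first_passage D r" by linarith
  qed simp
next
  case False
  define a where "a = first_passage D r0 - \<epsilon> / 2"
  have "\<not> ennreal r0 \<le> D a"
    using first_passage_le[of a r0 D] False assms(3) by (auto simp: a_def)
  then obtain d where d: "D a = ennreal d" "0 \<le> d" "d < r0"
    by (cases "D a") (auto simp: ennreal_less_iff)
  show ?thesis
  proof (rule that[of "r0 - d"])
    show "0 < r0 - d" using d(3) by simp
    fix r assume "r0 - (r0 - d) < r"
    then have "D a < ennreal r" using d by (simp add: ennreal_less_iff)
    then have "a \<le> first_passage D r" using assms(1,2) by (intro first_passage_ge) auto
    then show "first_passage D r0 - \<epsilon> < first_passage D r" using assms(3) by (simp add: a_def)
  qed
qed

lemma isCont_first_passage: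
  assumes "mono D" "\<And>r. \<exists>t\<ge>0. ennreal r \<le> D t"
    and "\<And>s t. 0 \<le> s \<Longrightarrow> s < t \<Longrightarrow> D s \<noteq> \<infinity> \<Longrightarrow> D s < D t"
  shows "isCont (first_passage D) r0"
  unfolding continuous_at_eps_delta
proof (intro allI impI)
  fix \<epsilon> :: real assume "0 < \<epsilon>"
  obtain \<delta>1 where "0 < \<delta>1" and upper: "\<And>r. r < r0 + \<delta>1 \<Longrightarrow> first_passage D r < first_passage D r0 + \<epsilon>"
    using first_passage_upper_semicontinuous[OF assms \<open>0 < \<epsilon>\<close>] by blast
  obtain \<delta>2 where "0 < \<delta>2" and lower: "\<And>r. r0 - \<delta>2 < r \<Longrightarrow> first_passage D r0 - \<epsilon> < first_passage D r"
    using first_passage_lower_semicontinuous[OF assms(1,2) \<open>0 < \<epsilon>\<close>] by blast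
  show "\<exists>\<delta>>0. \<forall>r. dist r r0 < \<delta> \<longrightarrow> dist (first_passage D r) (first_passage D r0) < \<epsilon>"
  proof (intro exI[of _ "min \<delta>1 \<delta>2"] conjI allI impI)
    show "0 < min \<delta>1 \<delta>2" using \<open>0 < \<delta>1\<close> \<open>0 < \<delta>2\<close> by simp
    fix r assume "dist r r0 < min \<delta>1 \<delta>2"
    then have "r < r0 + \<delta>1" "r0 - \<delta>2 < r" by (auto simp: dist_real_def)
    with upper lower show "dist (first_passage D r) (first_passage D r0) < \<epsilon>"
      by (fastforce simp: dist_real_def abs_less_iff)
  qed
qed

lemma ms_inverse_continuous_mono:
  assumes "PP \<omega> \<subseteq> {0..} \<times> {0<..}"
    and "infinite (PP \<omega> \<inter> ({0..} \<times> {1..}))"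
    and "\<forall>a b. 0 \<le> a \<longrightarrow> a < b \<longrightarrow> (\<exists>p\<in>PP \<omega>. a < fst p \<and> fst p \<le> b)"
  shows "continuous_on {0..} (ms_inverse PP \<omega>) \<and> mono_on {0..} (ms_inverse PP \<omega>)"
proof -
  let ?D = "ms_subordinator PP \<omega>"
  have unbounded: "\<exists>t\<ge>0. ennreal r \<le> ?D t" for r
    using assms(2) by (rule ms_subordinator_unbounded)
  have strict: "?D s < ?D t" if st: "0 \<le> s" "s < t" "?D s \<noteq> \<infinity>" for s t
  proof -
    obtain p where "p \<in> PP \<omega>" "s < fst p" "fst p \<le> t" using assms(3) st(1,2) by blast
    moreover have "0 < snd p" using \<open>p \<in> PP \<omega>\<close> assms(1) by auto
    ultimately show ?thesis using st(3) by (intro ms_subordinator_less_across_jump)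
  qed
  show ?thesis
    unfolding ms_inverse_eq_first_passage
    using isCont_first_passage[OF mono_ms_subordinator unbounded strict]
      mono_first_passage[OF unbounded]
    by (auto intro: continuous_at_imp_continuous_on mono_imp_mono_on)
qed

theorem mainTheorem4:
  fixes \<beta> :: "real \<Rightarrow> real" and M :: "'a measure" and PP :: "'a \<Rightarrow> (real \<times> real) set"
  assumes "continuous_on {0..} \<beta>"
    and "\<And>t. 0 \<le> t \<Longrightarrow> 0 < \<beta> t \<and> \<beta> t < 1"
    and "poisson_point_process M PP ({0..} \<times> {0<..}) (ms_intensity \<beta>)"
  shows "AE \<omega> in M. continuous_on {0..} (ms_inverse PP \<omega>) \<and> mono_on {0..} (ms_inverse PP \<omega>)"
proof -
  have pos: "0 < \<beta> t" if "0 \<le> t" for t using assms(2) that by blast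
  have sets: "sets (ms_intensity \<beta>) = sets (borel \<Otimes>\<^sub>M borel)"
    unfolding ms_intensity_def borel_prod by simp
  have "AE \<omega> in M. PP \<omega> \<subseteq> {0..} \<times> {0<..}"
    using assms(3) unfolding poisson_point_process_def by (auto intro: AE_I2)
  moreover have "AE \<omega> in M. infinite (PP \<omega> \<inter> ({0..} \<times> {1..}))"
    using assms(3) by (rule poisson_point_process_AE_infinite)
      (simp_all add: sets emeasure_ms_intensity_large_jumps assms(1) pos)
  moreover have "AE \<omega> in M. \<forall>a b. 0 \<le> a \<longrightarrow> a < b \<longrightarrow> (\<exists>p\<in>PP \<omega>. a < fst p \<and> fst p \<le> b)"
  proof (rule AE_point_in_every_interval)
    fix a b :: real assume "0 \<le> a" "a < b"
    have "AE \<omega> in M. infinite (PP \<omega> \<inter> ({a<..b} \<times> {0<..}))"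
      using assms(3) by (rule poisson_point_process_AE_infinite)
        (simp_all add: sets emeasure_ms_intensity_time_strip assms(1) pos \<open>0 \<le> a\<close> \<open>a < b\<close>)
    then show "AE \<omega> in M. \<exists>p\<in>PP \<omega>. a < fst p \<and> fst p \<le> b"
      by eventually_elim (force dest: infinite_imp_nonempty)
  qed
  ultimately show ?thesis
    by eventually_elim (rule ms_inverse_continuous_mono)
qed

end
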